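(* Let $\mathrm{SO}(3)\times\mathrm{SO}(2)$ act on $\Lambda^2_-S^4$. Every point is mapped into the fiber over some ${}^t(x_1,0,0,x_4,0)$ with $x_1,x_4\ge0$. For $p_0=({}^t(x_1,0,0,x_4,0),{}^t(a_1,a_2,a_3))$, the orbit through $p_0$ is diffeomorphic to: $\mathrm{SO}(3)\times\mathrm{SO}(2)$ if $0<x_1<1$, $(a_2,a_3)\ne0$; $S^2\times S^1$ if $0<x_1<1$, $(a_2,a_3)=0$; $(\mathrm{SO}(3)\times\mathrm{SO}(2))/\mathrm{SO}(2)$ if $x_1=1$, $(a_2,a_3)\ne0$, where the $\mathrm{SO}(2)$ is $\{(\mathrm{diag}(1,h),h):h\in\mathrm{SO}(2)\}$; $S^2$ if $x_1=1$, $(a_2,a_3)=0$; $S^2\times S^1$ if $x_1=0$, $(a_1,a_2,a_3)\ne0$; $S^1$ if $x_1=0$, $(a_1,a_2,a_3)=0$.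
   Context: $S^4\subset\mathbb R^5$ is the unit sphere, $\Lambda^2_-S^4$ the bundle of anti-self-dual 2-forms (round metric); $\mathrm{SO}(5)$ acts on $\Lambda^2_-S^4$ by lifting its linear action on $S^4$ to 2-forms ($g\cdot\omega=(g^{-1})^*\omega$); $\mathrm{SO}(3)\times\mathrm{SO}(2)\subset\mathrm{SO}(5)$ is block diagonal acting on $(x_1,x_2,x_3)$ and $(x_4,x_5)$. On $S^4\setminus\{x_5=\pm1\}$ use the frame $e_1=\frac{1}{\sqrt{1-x_5^2}}{}^t(-x_2,x_1,-x_4,x_3,0)$, $e_2=\frac{1}{\sqrt{1-x_5^2}}{}^t(-x_3,x_4,x_1,-x_2,0)$, $e_3=\frac{1}{\sqrt{1-x_5^2}}{}^t(-x_4,-x_3,x_2,x_1,0)$, $e_4=\frac{1}{\sqrt{1-x_5^2}}{}^t(-x_1x_5,-x_2x_5,-x_3x_5,-x_4x_5,1-x_5^2)$ with dual coframe $e^i$, $\omega_1=e^{12}-e^{34}$, $\omega_2=e^{13}-e^{42}$, $\omega_3=e^{14}-e^{23}$; $(x,{}^t(a_1,a_2,a_3))$ denotes $\sum_ia_i\omega_i|_x$. *)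

theory Defs
  imports "HOL-Analysis.Analysis"
begin

primrec Ck_on :: "nat \<Rightarrow> 'a::euclidean_space set \<Rightarrow> ('a \<Rightarrow> 'b::real_normed_vector) \<Rightarrow> bool" where
  "Ck_on 0 U f = continuous_on U f"
| "Ck_on (Suc k) U f = (f differentiable_on U \<and>
      (\<forall>i\<in>Basis. Ck_on k U (\<lambda>x. frechet_derivative f (at x) i)))"

text \<open>A map defined on an arbitrary subset S is smooth if it locally extends to a
  C-infinity map on an open neighbourhood (Milnor's convention).\<close>
definition smooth_map :: "'a::euclidean_space set \<Rightarrow> ('a \<Rightarrow> 'b::euclidean_space) \<Rightarrow> bool" where
  "smooth_map S f \<longleftrightarrow> (\<forall>x\<in>S. \<exists>U g. open U \<and> x \<in> U \<and> (\<forall>k. Ck_on k U g) \<and>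
       (\<forall>y\<in>S \<inter> U. g y = f y))"

definition diffeomorphic_sets :: "'a::euclidean_space set \<Rightarrow> 'b::euclidean_space set \<Rightarrow> bool" where
  "diffeomorphic_sets S T \<longleftrightarrow> (\<exists>f g. f ` S = T \<and> g ` T = S \<and> (\<forall>x\<in>S. g (f x) = x) \<and>
       (\<forall>y\<in>T. f (g y) = y) \<and> smooth_map S f \<and> smooth_map T g)"

text \<open>M is diffeomorphic to the homogeneous space G/H (G a matrix group embedded in a
  Euclidean space with multiplication mult, H a closed subgroup): there is a smooth
  surjection G \<rightarrow> M whose fibres are exactly the cosets gH and which has the universal
  property of the quotient (every smooth right-H-invariant function on G descends to a
  smooth function on M).\<close>
definition diffeomorphic_quotient ::
  "'b::euclidean_space set \<Rightarrow> 'a::euclidean_space set \<Rightarrow> ('a \<Rightarrow> 'a \<Rightarrow> 'a) \<Rightarrow> 'a set \<Rightarrow> bool" where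
  "diffeomorphic_quotient M G gmul H \<longleftrightarrow> (\<exists>\<pi>. smooth_map G \<pi> \<and> \<pi> ` G = M \<and>
     (\<forall>g\<in>G. \<forall>g'\<in>G. \<pi> g = \<pi> g' \<longleftrightarrow> (\<exists>h\<in>H. g' = gmul g h)) \<and>
     (\<forall>f :: 'a \<Rightarrow> real. smooth_map G f \<and> (\<forall>g\<in>G. \<forall>h\<in>H. f (gmul g h) = f g) \<longrightarrow>
        (\<exists>f'. smooth_map M f' \<and> (\<forall>g\<in>G. f' (\<pi> g) = f g))))"

definition SO :: "(real^'n^'n) set" where
  "SO = {A. rotation_matrix A}"

definition blockdiag :: "real^3^3 \<Rightarrow> real^2^2 \<Rightarrow> real^5^5" where
  "blockdiag A B = vector [
     vector [A$1$1, A$1$2, A$1$3, 0, 0],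
     vector [A$2$1, A$2$2, A$2$3, 0, 0],
     vector [A$3$1, A$3$2, A$3$3, 0, 0],
     vector [0, 0, 0, B$1$1, B$1$2],
     vector [0, 0, 0, B$2$1, B$2$2]]"

definition G32 :: "((real^3^3) \<times> (real^2^2)) set" where
  "G32 = SO \<times> SO"

definition mult32 :: "(real^3^3) \<times> (real^2^2) \<Rightarrow> (real^3^3) \<times> (real^2^2) \<Rightarrow> (real^3^3) \<times> (real^2^2)" where
  "mult32 p q = (fst p ** fst q, snd p ** snd q)"

definition diag1 :: "real^2^2 \<Rightarrow> real^3^3" where
  "diag1 h = vector [vector [1, 0, 0], vector [0, h$1$1, h$1$2], vector [0, h$2$1, h$2$2]]"

definition H_diag :: "((real^3^3) \<times> (real^2^2)) set" where
  "H_diag = {(diag1 h, h) | h. h \<in> SO}"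

text \<open>A 2-form on T_x S^4 is represented by a skew 5x5 matrix W with W x = 0,
  via omega(u,v) = u . (W v). The orientation of S^4 is (v1..v4) positive iff
  det[x,v1,..,v4] > 0 (for which omega_1, omega_2, omega_3 below are anti-self-dual).\<close>
definition hodge_star_form :: "real^5 \<Rightarrow> real^5^5 \<Rightarrow> real^5 \<Rightarrow> real^5 \<Rightarrow> real" where
  "hodge_star_form x W u v =
     (\<Sum>d\<in>UNIV. \<Sum>e\<in>UNIV. W$d$e * det (vector [x, u, v, axis d 1, axis e 1] :: real^5^5)) / 2"

definition ASD_bundle :: "((real^5) \<times> (real^5^5)) set" where
  "ASD_bundle = {(x, W). x \<in> sphere 0 1 \<and> transpose W = - W \<and> W *v x = 0 \<and>
       (\<forall>u v. hodge_star_form x W u v = - (u \<bullet> (W *v v)))}"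

text \<open>Action of SO(5): g.(x,omega) = (g x, (g^-1)^* omega), i.e. W \<mapsto> g W g^T.\<close>
definition act :: "real^5^5 \<Rightarrow> (real^5) \<times> (real^5^5) \<Rightarrow> (real^5) \<times> (real^5^5)" where
  "act g p = (g *v fst p, g ** snd p ** transpose g)"

definition orbit32 :: "(real^5) \<times> (real^5^5) \<Rightarrow> ((real^5) \<times> (real^5^5)) set" where
  "orbit32 p = {act (blockdiag A B) p | A B. A \<in> SO \<and> B \<in> SO}"

definition fr1 :: "real^5 \<Rightarrow> real^5" where
  "fr1 x = (1 / sqrt (1 - (x$5)\<^sup>2)) *\<^sub>R vector [- x$2, x$1, - x$4, x$3, 0]"
definition fr2 :: "real^5 \<Rightarrow> real^5" where
  "fr2 x = (1 / sqrt (1 - (x$5)\<^sup>2)) *\<^sub>R vector [- x$3, x$4, x$1, - x$2, 0]"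
definition fr3 :: "real^5 \<Rightarrow> real^5" where
  "fr3 x = (1 / sqrt (1 - (x$5)\<^sup>2)) *\<^sub>R vector [- x$4, - x$3, x$2, x$1, 0]"
definition fr4 :: "real^5 \<Rightarrow> real^5" where
  "fr4 x = (1 / sqrt (1 - (x$5)\<^sup>2)) *\<^sub>R
     vector [- x$1 * x$5, - x$2 * x$5, - x$3 * x$5, - x$4 * x$5, 1 - (x$5)\<^sup>2]"

text \<open>Matrix of e^i wedge e^j (dual coframe = inner product with e_i).\<close>
definition wedge :: "real^5 \<Rightarrow> real^5 \<Rightarrow> real^5^5" where
  "wedge u v = (\<chi> i j. u$i * v$j - v$i * u$j)"

definition om1 :: "real^5 \<Rightarrow> real^5^5" where
  "om1 x = wedge (fr1 x) (fr2 x) - wedge (fr3 x) (fr4 x)"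
definition om2 :: "real^5 \<Rightarrow> real^5^5" where
  "om2 x = wedge (fr1 x) (fr3 x) - wedge (fr4 x) (fr2 x)"
definition om3 :: "real^5 \<Rightarrow> real^5^5" where
  "om3 x = wedge (fr1 x) (fr4 x) - wedge (fr2 x) (fr3 x)"

text \<open>The point (x, t(a1,a2,a3)) = (x, sum a_i omega_i|_x).\<close>
definition fpt :: "real^5 \<Rightarrow> real \<Rightarrow> real \<Rightarrow> real \<Rightarrow> (real^5) \<times> (real^5^5)" where
  "fpt x a1 a2 a3 = (x, a1 *\<^sub>R om1 x + a2 *\<^sub>R om2 x + a3 *\<^sub>R om3 x)"

end

theory Submission
  imports Defs
begin

(* Rotating the R^3- and R^2-blocks separately moves any base point x of S^4 to
   (|x_{123}|, 0, 0, |x_{45}|, 0), so every orbit meets a fibre over (c,0,0,s,0) with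
   c, s >= 0, c^2 + s^2 = 1.  On that fibre the frame e_1..e_4 is explicit, and the image of
   the point (x, a) under (A, B) is an explicit polynomial expression in the columns of A and
   the first column b of B (B is the rotation with first column b).  In each of the six
   cases we either write down a smooth inverse of the orbit map onto the claimed model
   (SO(3) x SO(2), S^2 x S^1, S^2, S^1), read off from the orbit point by linear algebra, or,
   in the case x = e_1 with (a_2,a_3) <> 0, a smooth section of the orbit map whose fibres
   are the cosets of the diagonal SO(2), which yields the quotient description. *)

section \<open>A C^k calculus on open sets\<close>

lemma Ck_mono: "Ck_on (Suc k) U f \<Longrightarrow> Ck_on k U f"
proof (induction k arbitrary: f)
  case 0 then show ?case by (simp add: differentiable_imp_continuous_on)
next
  case (Suc k) then show ?case by auto
qed

lemma Ck_Suc_dest: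
  assumes "Ck_on (Suc k) U f" "open U" "x \<in> U"
  shows "(f has_derivative frechet_derivative f (at x)) (at x)"
  using assms by (simp add: differentiable_on_eq_differentiable_at frechet_derivative_works[symmetric])

lemma Ck_cong:
  assumes "open U" "\<And>x. x \<in> U \<Longrightarrow> f x = g x" "Ck_on k U f"
  shows "Ck_on k U g"
  using assms
proof (induction k arbitrary: f g)
  case 0
  then show ?case using continuous_on_cong[of U U f g] by simp
next
  case (Suc k)
  have dg: "(g has_derivative frechet_derivative f (at x)) (at x)" if x: "x \<in> U" for x
    by (rule has_derivative_transform_within_open[OF Ck_Suc_dest[OF Suc.prems(3,1) x] \<open>open U\<close> x])
       (rule Suc.prems(2))
  then have same_derivative: "frechet_derivative g (at x) = frechet_derivative f (at x)" if "x \<in> U" for x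
    using frechet_derivative_at that by metis
  have "g differentiable_on U"
    unfolding differentiable_on_eq_differentiable_at[OF Suc.prems(1)] differentiable_def
    using dg by blast
  moreover have "Ck_on k U (\<lambda>x. frechet_derivative g (at x) i)" if i: "i \<in> Basis" for i
    using Suc.IH[of "\<lambda>x. frechet_derivative f (at x) i"] Suc.prems(1,3) i same_derivative by simp
  ultimately show ?case by simp
qed

lemma Ck_Suc_intro:
  assumes "open U" "\<And>x. x \<in> U \<Longrightarrow> (f has_derivative D x) (at x)"
    "\<And>i. i \<in> Basis \<Longrightarrow> Ck_on k U (\<lambda>x. D x i)"
  shows "Ck_on (Suc k) U f"
proof -
  have D: "frechet_derivative f (at x) = D x" if "x \<in> U" for x
    using frechet_derivative_at[OF assms(2)[OF that]] by simp
  have "Ck_on k U (\<lambda>x. frechet_derivative f (at x) i)" if "i \<in> Basis" for i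
    by (rule Ck_cong[OF assms(1) _ assms(3)[OF that]]) (simp add: D)
  moreover have "f differentiable_on U"
    unfolding differentiable_on_eq_differentiable_at[OF assms(1)] differentiable_def
    using assms(2) by blast
  ultimately show ?thesis by simp
qed

lemma Ck_const: "open U \<Longrightarrow> Ck_on k U (\<lambda>x. c)"
proof (induction k arbitrary: c)
  case 0 then show ?case by simp
next
  case (Suc k)
  show ?case
    by (rule Ck_Suc_intro[where D="\<lambda>x h. 0"]) (simp_all add: Suc.IH Suc.prems)
qed

lemma Ck_add:
  fixes f g :: "'a::euclidean_space \<Rightarrow> 'b::real_normed_vector"
  assumes "open U"
  shows "Ck_on k U f \<Longrightarrow> Ck_on k U g \<Longrightarrow> Ck_on k U (\<lambda>x. f x + g x)"
proof (induction k arbitrary: f g)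
  case 0 then show ?case by (simp add: continuous_on_add)
next
  case (Suc k)
  note df = Ck_Suc_dest[OF Suc.prems(1) assms] and dg = Ck_Suc_dest[OF Suc.prems(2) assms]
  show ?case
  proof (rule Ck_Suc_intro[OF assms, where D="\<lambda>x h. frechet_derivative f (at x) h + frechet_derivative g (at x) h"])
    show "((\<lambda>x. f x + g x) has_derivative (\<lambda>h. frechet_derivative f (at x) h + frechet_derivative g (at x) h)) (at x)"
      if "x \<in> U" for x
      using has_derivative_add[OF df dg] that by blast
    show "Ck_on k U (\<lambda>x. frechet_derivative f (at x) i + frechet_derivative g (at x) i)" if "i \<in> Basis" for i
      using Suc.IH Suc.prems that by simp
  qed
qed

lemma Ck_linear:
  assumes "open U" "bounded_linear L"
  shows "Ck_on k U L"
proof (cases k)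
  case 0 then show ?thesis using assms by (simp add: linear_continuous_on)
next
  case (Suc m)
  show ?thesis unfolding Suc
    by (rule Ck_Suc_intro[where D="\<lambda>x h. L h"])
       (use assms in \<open>auto simp: Ck_const bounded_linear_imp_has_derivative\<close>)
qed

lemma Ck_bilinear:
  fixes f :: "'a::euclidean_space \<Rightarrow> 'b::real_normed_vector" and g :: "'a \<Rightarrow> 'c::real_normed_vector"
  assumes "bounded_bilinear P" "open U"
  shows "Ck_on k U f \<Longrightarrow> Ck_on k U g \<Longrightarrow> Ck_on k U (\<lambda>x. P (f x) (g x))"
proof (induction k arbitrary: f g)
  case 0 then show ?case using bounded_bilinear.continuous_on[OF assms(1)] by simp
next
  case (Suc k)
  note df = Ck_Suc_dest[OF Suc.prems(1) assms(2)] and dg = Ck_Suc_dest[OF Suc.prems(2) assms(2)]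
  show ?case
  proof (rule Ck_Suc_intro[OF assms(2), where D="\<lambda>x h. P (f x) (frechet_derivative g (at x) h) + P (frechet_derivative f (at x) h) (g x)"])
    show "((\<lambda>x. P (f x) (g x)) has_derivative (\<lambda>h. P (f x) (frechet_derivative g (at x) h) + P (frechet_derivative f (at x) h) (g x))) (at x)"
      if "x \<in> U" for x
      using bounded_bilinear.FDERIV[OF assms(1) df dg] that by blast
    show "Ck_on k U (\<lambda>x. P (f x) (frechet_derivative g (at x) i) + P (frechet_derivative f (at x) i) (g x))"
      if i: "i \<in> Basis" for i
      using Suc.prems i
      by (intro Ck_add[OF assms(2)] Suc.IH) (auto intro: Ck_mono)
  qed
qed

lemma Ck_sum:
  assumes "open U" "finite S" "\<And>j. j \<in> S \<Longrightarrow> Ck_on k U (f j)"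
  shows "Ck_on k U (\<lambda>x. \<Sum>j\<in>S. f j x)"
  using assms(2,3)
proof (induction S rule: finite_induct)
  case empty then show ?case by (simp add: Ck_const assms(1))
next
  case (insert a S) then show ?case by (simp add: Ck_add assms(1))
qed

text \<open>The derivative of f o g is written in coordinates,
  Df(g x)(Dg x h) = sum_j (Dg x h . j) Df(g x) j, so that its partials are built from
  partials of f and g by products and sums, and induction applies.\<close>
lemma Ck_compose:
  assumes "open U" "open V" "g ` U \<subseteq> V"
  shows "Ck_on k V f \<Longrightarrow> Ck_on k U g \<Longrightarrow> Ck_on k U (\<lambda>x. f (g x))"
proof (induction k arbitrary: f)
  case 0
  have "continuous_on U (\<lambda>x. f (g x))"
    by (rule continuous_on_compose2[of V f U g]) (use 0 assms(3) in simp_all)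
  then show ?case by simp
next
  case (Suc k)
  define Dg where "Dg x = frechet_derivative g (at x)" for x
  define Df where "Df y = frechet_derivative f (at y)" for y
  have dg: "(g has_derivative Dg x) (at x)" if "x \<in> U" for x
    using Ck_Suc_dest[OF Suc.prems(2) assms(1) that] by (simp add: Dg_def)
  have df: "(f has_derivative Df (g x)) (at (g x))" if "x \<in> U" for x
    using Ck_Suc_dest[OF Suc.prems(1) assms(2)] assms(3) that by (auto simp: Df_def)
  have coords: "Df (g x) (Dg x h) = (\<Sum>j\<in>Basis. (Dg x h \<bullet> j) *\<^sub>R Df (g x) j)" if "x \<in> U" for x h
  proof -
    have "Df (g x) (Dg x h) = Df (g x) (\<Sum>j\<in>Basis. (Dg x h \<bullet> j) *\<^sub>R j)"
      by (simp add: euclidean_representation)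
    also have "\<dots> = (\<Sum>j\<in>Basis. (Dg x h \<bullet> j) *\<^sub>R Df (g x) j)"
      using has_derivative_linear[OF df[OF that]] by (simp add: linear_sum linear_scale)
    finally show ?thesis .
  qed
  show ?case
  proof (rule Ck_Suc_intro[OF assms(1), where D="\<lambda>x h. \<Sum>j\<in>Basis. (Dg x h \<bullet> j) *\<^sub>R Df (g x) j"])
    show "((\<lambda>x. f (g x)) has_derivative (\<lambda>h. \<Sum>j\<in>Basis. (Dg x h \<bullet> j) *\<^sub>R Df (g x) j)) (at x)"
      if "x \<in> U" for x
      using diff_chain_at[OF dg[OF that] df[OF that]] coords[OF that] by (simp add: o_def)
  next
    fix i :: 'a assume i: "i \<in> Basis"
    show "Ck_on k U (\<lambda>x. \<Sum>j\<in>Basis. (Dg x i \<bullet> j) *\<^sub>R Df (g x) j)"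
    proof (rule Ck_sum[OF assms(1)])
      fix j :: 'b assume j: "j \<in> Basis"
      have "Ck_on k U (\<lambda>x. Dg x i \<bullet> j)"
        using Ck_bilinear[OF bounded_bilinear_inner assms(1) _ Ck_const[OF assms(1), of k j]] Suc.prems(2) i
        by (simp add: Dg_def)
      moreover have "Ck_on k U (\<lambda>x. Df (g x) j)"
        using Suc.IH[of "\<lambda>y. Df y j"] Suc.prems(1) j Ck_mono[OF Suc.prems(2)] by (simp add: Df_def)
      ultimately show "Ck_on k U (\<lambda>x. (Dg x i \<bullet> j) *\<^sub>R Df (g x) j)"
        by (rule Ck_bilinear[OF bounded_bilinear_scaleR assms(1)])
    qed simp
  qed
qed

lemma Ck_restrict:
  assumes "open V" "V \<subseteq> U"
  shows "Ck_on k U f \<Longrightarrow> Ck_on k V f"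
proof (induction k arbitrary: f)
  case 0 then show ?case using assms continuous_on_subset by (metis Ck_on.simps(1))
next
  case (Suc k)
  then show ?case using assms(2) differentiable_on_subset by (metis Ck_on.simps(2))
qed

section \<open>Globally smooth maps\<close>

text \<open>All maps in the proof (orbit maps and their inverses) are polynomial or rational with
  constant denominators, hence C-infinity on the whole space.\<close>
definition smooth :: "('a::euclidean_space \<Rightarrow> 'b::real_normed_vector) \<Rightarrow> bool" where
  "smooth f \<longleftrightarrow> (\<forall>k. Ck_on k UNIV f)"

lemma smooth_const: "smooth (\<lambda>x. c)"
  by (simp add: smooth_def Ck_const)

lemma smooth_compose: "smooth f \<Longrightarrow> smooth g \<Longrightarrow> smooth (\<lambda>x. f (g x))"
  unfolding smooth_def using Ck_compose[of UNIV UNIV g] by auto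

lemma smooth_linear:
  fixes L :: "'b::euclidean_space \<Rightarrow> 'c::real_normed_vector"
  assumes "linear L" "smooth f"
  shows "smooth (\<lambda>x. L (f x))"
proof -
  have "smooth L"
    using Ck_linear[OF open_UNIV] assms(1) unfolding smooth_def linear_conv_bounded_linear by blast
  then show ?thesis using smooth_compose assms(2) by blast
qed

lemma smooth_id: "smooth (\<lambda>x. x)"
  unfolding smooth_def using Ck_linear[OF open_UNIV bounded_linear_ident] by auto

lemma smooth_bilinear:
  fixes P :: "'b::euclidean_space \<Rightarrow> 'c::euclidean_space \<Rightarrow> 'd::real_normed_vector"
  shows "bilinear P \<Longrightarrow> smooth f \<Longrightarrow> smooth g \<Longrightarrow> smooth (\<lambda>x. P (f x) (g x))"
  unfolding smooth_def bilinear_conv_bounded_bilinear using Ck_bilinear[OF _ open_UNIV] by blast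

lemma smooth_add: "smooth f \<Longrightarrow> smooth g \<Longrightarrow> smooth (\<lambda>x. f x + g x)"
  unfolding smooth_def using Ck_add[OF open_UNIV] by blast

lemma smooth_diff:
  fixes f g :: "'a::euclidean_space \<Rightarrow> 'b::euclidean_space"
  shows "smooth f \<Longrightarrow> smooth g \<Longrightarrow> smooth (\<lambda>x. f x - g x)"
  using smooth_add[OF _ smooth_linear[OF linear_uminus], of f g] by simp

lemma smooth_scaleR: "smooth f \<Longrightarrow> smooth g \<Longrightarrow> smooth (\<lambda>x. f x *\<^sub>R g x)"
  unfolding smooth_def using Ck_bilinear[OF bounded_bilinear_scaleR open_UNIV] by blast

lemma smooth_fst:
  fixes f :: "'a::euclidean_space \<Rightarrow> 'b::euclidean_space \<times> 'c::euclidean_space"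
  shows "smooth f \<Longrightarrow> smooth (\<lambda>x. fst (f x))"
  by (rule smooth_linear[OF linear_fst])

lemma smooth_snd:
  fixes f :: "'a::euclidean_space \<Rightarrow> 'b::euclidean_space \<times> 'c::euclidean_space"
  shows "smooth f \<Longrightarrow> smooth (\<lambda>x. snd (f x))"
  by (rule smooth_linear[OF linear_snd])

lemma smooth_pair:
  fixes f :: "'a::euclidean_space \<Rightarrow> 'b::euclidean_space" and g :: "'a \<Rightarrow> 'c::euclidean_space"
  assumes "smooth f" "smooth g"
  shows "smooth (\<lambda>x. (f x, g x))"
proof -
  have "linear (\<lambda>a::'b. (a, 0::'c))" "linear (\<lambda>a::'c. (0::'b, a))"
    by (auto intro!: linearI)
  from smooth_add[OF smooth_linear[OF this(1) assms(1)] smooth_linear[OF this(2) assms(2)]]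
  show ?thesis by simp
qed

lemma bilinear_mv: "bilinear ((*v) :: real^'n^'m \<Rightarrow> real^'n \<Rightarrow> real^'m)"
  unfolding bilinear_def
  by (auto intro!: linearI simp: vec_eq_iff matrix_vector_mult_def algebra_simps sum.distrib sum_distrib_left)

lemma bilinear_mm: "bilinear ((**) :: real^'n^'m \<Rightarrow> real^'p^'n \<Rightarrow> real^'p^'m)"
  unfolding bilinear_def
  by (auto intro!: linearI simp: vec_eq_iff matrix_matrix_mult_def algebra_simps sum.distrib sum_distrib_left)

lemma smooth_mv: "smooth f \<Longrightarrow> smooth g \<Longrightarrow> smooth (\<lambda>x. (f x :: real^'n^'m) *v g x)"
  by (rule smooth_bilinear[OF bilinear_mv])

lemma smooth_mm: "smooth f \<Longrightarrow> smooth g \<Longrightarrow> smooth (\<lambda>x. (f x :: real^'n^'m) ** (g x :: real^'p^'n))"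
  by (rule smooth_bilinear[OF bilinear_mm])

lemma smooth_cross: "smooth f \<Longrightarrow> smooth g \<Longrightarrow> smooth (\<lambda>x. cross3 (f x) (g x))"
  by (rule smooth_bilinear[OF bilinear_cross])

lemma smooth_transpose: "smooth f \<Longrightarrow> smooth (\<lambda>x. transpose (f x :: real^'n^'m))"
  by (rule smooth_linear) (auto intro!: linearI simp: vec_eq_iff transpose_def)

lemma smooth_imp_smooth_map: "smooth F \<Longrightarrow> (\<And>x. x \<in> S \<Longrightarrow> F x = f x) \<Longrightarrow> smooth_map S f"
  unfolding smooth_map_def smooth_def by (metis IntD1 open_UNIV UNIV_I)

text \<open>Precomposing a smooth map on G with a globally smooth map carrying M into G gives a
  smooth map on M: a local smooth extension F of f near Psi m pulls back along Psi.\<close>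
lemma smooth_map_compose_smooth:
  assumes f: "smooth_map G f" and Psi: "smooth Psi" "\<And>m. m \<in> M \<Longrightarrow> Psi m \<in> G"
  shows "smooth_map M (\<lambda>m. f (Psi m))"
  unfolding smooth_map_def
proof
  fix m assume m: "m \<in> M"
  obtain U F where UF: "open U" "Psi m \<in> U" "\<forall>k. Ck_on k U F" "\<forall>y\<in>G \<inter> U. F y = f y"
    using f Psi(2)[OF m] unfolding smooth_map_def by meson
  define V where "V = Psi -` U"
  have "continuous_on UNIV Psi"
    using Psi(1) Ck_on.simps(1) unfolding smooth_def by blast
  then have V: "open V"
    using continuous_on_open_vimage[of UNIV Psi] UF(1) by (simp add: V_def)
  have "Ck_on k V (\<lambda>x. F (Psi x))" for k
    using Ck_compose[OF V UF(1), of Psi k F] Ck_restrict[OF V subset_UNIV, of k Psi] UF(3) Psi(1)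
    by (auto simp: V_def smooth_def)
  moreover have "\<forall>y\<in>M \<inter> V. F (Psi y) = f (Psi y)"
    using UF(4) Psi(2) by (auto simp: V_def)
  ultimately show "\<exists>U g. open U \<and> m \<in> U \<and> (\<forall>k. Ck_on k U g) \<and> (\<forall>y\<in>M \<inter> U. g y = f (Psi y))"
    using V UF(2) by (auto simp: V_def)
qed

section \<open>Criteria for diffeomorphisms and quotient diffeomorphisms\<close>

lemma diffeomorphic_setsI:
  assumes "smooth F" "smooth G" "\<And>x. x \<in> S \<Longrightarrow> G (F x) = x" "\<And>y. y \<in> T \<Longrightarrow> F (G y) = y"
    "\<And>x. x \<in> S \<Longrightarrow> F x \<in> T" "\<And>y. y \<in> T \<Longrightarrow> G y \<in> S"
  shows "diffeomorphic_sets S T"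
  unfolding diffeomorphic_sets_def
proof (intro exI conjI)
  show "F ` S = T" using assms(4-6) by force
  show "G ` T = S" using assms(3,5,6) by force
  show "\<forall>x\<in>S. G (F x) = x" "\<forall>y\<in>T. F (G y) = y" using assms(3,4) by auto
  show "smooth_map S F" "smooth_map T G" using smooth_imp_smooth_map assms(1,2) by blast+
qed

text \<open>A smooth surjection proj : G -> M whose fibres are the cosets gH and which admits a
  globally smooth section Psi : M -> G exhibits M as G/H: an H-invariant smooth f
  descends to f o Psi, because Psi (proj g) lies in the coset of g.\<close>
lemma diffeomorphic_quotientI:
  assumes proj: "smooth proj" "proj ` G = M"
    and fibres: "\<And>g g'. g \<in> G \<Longrightarrow> g' \<in> G \<Longrightarrow> proj g = proj g' \<longleftrightarrow> (\<exists>h\<in>H. g' = gmul g h)"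
    and sect: "smooth Psi" "\<And>m. m \<in> M \<Longrightarrow> Psi m \<in> G" "\<And>m. m \<in> M \<Longrightarrow> proj (Psi m) = m"
  shows "diffeomorphic_quotient M G gmul H"
  unfolding diffeomorphic_quotient_def
proof (intro exI[of _ proj] conjI allI impI)
  show "smooth_map G proj" "proj ` G = M" using proj smooth_imp_smooth_map by blast+
  show "\<forall>g\<in>G. \<forall>g'\<in>G. proj g = proj g' \<longleftrightarrow> (\<exists>h\<in>H. g' = gmul g h)" using fibres by blast
  fix f :: "'a \<Rightarrow> real"
  assume f: "smooth_map G f \<and> (\<forall>g\<in>G. \<forall>h\<in>H. f (gmul g h) = f g)"
  have "f (Psi (proj g)) = f g" if g: "g \<in> G" for g
  proof -
    have "Psi (proj g) \<in> G" "proj (Psi (proj g)) = proj g" using g proj(2) sect(2,3) by auto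
    then obtain h where "h \<in> H" "Psi (proj g) = gmul g h" using fibres g by metis
    then show ?thesis using f g by simp
  qed
  moreover have "smooth_map M (\<lambda>m. f (Psi m))"
    using smooth_map_compose_smooth f sect(1,2) by blast
  ultimately show "\<exists>f'. smooth_map M f' \<and> (\<forall>g\<in>G. f' (proj g) = f g)" by auto
qed

section \<open>Coordinates on R^5 and 2-forms\<close>

lemma exhaust_5:
  fixes x :: 5
  shows "x = 1 \<or> x = 2 \<or> x = 3 \<or> x = 4 \<or> x = 5"
proof (induct x)
  case (of_int z)
  then have "z = 0 \<or> z = 1 \<or> z = 2 \<or> z = 3 \<or> z = 4" by fastforce
  then show ?case by auto
qed

lemma forall_5: "(\<forall>i::5. P i) \<longleftrightarrow> P 1 \<and> P 2 \<and> P 3 \<and> P 4 \<and> P 5"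
  by (metis exhaust_5)

lemma sum_5: "sum f (UNIV::5 set) = f 1 + f 2 + f 3 + f 4 + f 5"
proof -
  have U: "UNIV = {1, 2, 3, 4, 5::5}" using exhaust_5 by auto
  show ?thesis unfolding U by (simp add: ac_simps)
qed

lemma vector_5 [simp]:
 "(vector [a,b,c,d,e] ::('a::zero)^5)$1 = a"
 "(vector [a,b,c,d,e] ::('a::zero)^5)$2 = b"
 "(vector [a,b,c,d,e] ::('a::zero)^5)$3 = c"
 "(vector [a,b,c,d,e] ::('a::zero)^5)$4 = d"
 "(vector [a,b,c,d,e] ::('a::zero)^5)$5 = e"
  unfolding vector_def by simp_all

lemma vec5_eq: "(x::'a^5) = y \<longleftrightarrow> x$1 = y$1 \<and> x$2 = y$2 \<and> x$3 = y$3 \<and> x$4 = y$4 \<and> x$5 = y$5"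
  by (simp add: vec_eq_iff forall_5)
lemma vec3_eq: "(x::'a^3) = y \<longleftrightarrow> x$1 = y$1 \<and> x$2 = y$2 \<and> x$3 = y$3"
  by (simp add: vec_eq_iff forall_3)
lemma vec2_eq: "(x::'a^2) = y \<longleftrightarrow> x$1 = y$1 \<and> x$2 = y$2"
  by (simp add: vec_eq_iff forall_2)

lemma inner5: "(x::real^5) \<bullet> y = x$1*y$1 + x$2*y$2 + x$3*y$3 + x$4*y$4 + x$5*y$5"
  by (simp add: inner_vec_def sum_5)
lemma inner3: "(x::real^3) \<bullet> y = x$1*y$1 + x$2*y$2 + x$3*y$3"
  by (simp add: inner_vec_def sum_3)
lemma inner2: "(x::real^2) \<bullet> y = x$1*y$1 + x$2*y$2"
  by (simp add: inner_vec_def sum_2)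

definition emb3 :: "real^3 \<Rightarrow> real^5" where "emb3 u = vector [u$1, u$2, u$3, 0, 0]"
definition emb2 :: "real^2 \<Rightarrow> real^5" where "emb2 v = vector [0, 0, 0, v$1, v$2]"
definition first3 :: "real^5 \<Rightarrow> real^3" where "first3 z = vector [z$1, z$2, z$3]"
definition last2 :: "real^5 \<Rightarrow> real^2" where "last2 z = vector [z$4, z$5]"

lemma emb3_nth [simp]: "emb3 u $ 1 = u$1" "emb3 u $ 2 = u$2" "emb3 u $ 3 = u$3" "emb3 u $ 4 = 0" "emb3 u $ 5 = 0"
  by (simp_all add: emb3_def)
lemma emb2_nth [simp]: "emb2 u $ 1 = 0" "emb2 u $ 2 = 0" "emb2 u $ 3 = 0" "emb2 u $ 4 = u$1" "emb2 u $ 5 = u$2"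
  by (simp_all add: emb2_def)
lemma first3_nth [simp]: "first3 z $ 1 = z$1" "first3 z $ 2 = z$2" "first3 z $ 3 = z$3"
  by (simp_all add: first3_def)
lemma last2_nth [simp]: "last2 z $ 1 = z$4" "last2 z $ 2 = z$5"
  by (simp_all add: last2_def)

lemma emb_inner [simp]:
  "emb3 u \<bullet> emb3 u' = u \<bullet> u'" "emb2 v \<bullet> emb2 v' = v \<bullet> v'" "emb3 u \<bullet> emb2 v = 0" "emb2 v \<bullet> emb3 u = 0"
  by (simp_all add: inner5 inner3 inner2)

lemma emb_lin [simp]:
  "emb3 (u + u') = emb3 u + emb3 u'" "emb3 (r *\<^sub>R u) = r *\<^sub>R emb3 u" "emb3 (- u) = - emb3 u"
  "emb3 (u - u') = emb3 u - emb3 u'" "emb3 0 = 0"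
  "emb2 (v + v') = emb2 v + emb2 v'" "emb2 (r *\<^sub>R v) = r *\<^sub>R emb2 v" "emb2 (- v) = - emb2 v"
  "emb2 (v - v') = emb2 v - emb2 v'" "emb2 0 = 0"
  by (simp_all add: vec5_eq)

lemma first3_lin [simp]:
  "first3 (z + z') = first3 z + first3 z'" "first3 (r *\<^sub>R z) = r *\<^sub>R first3 z" "first3 (- z) = - first3 z"
  "first3 (z - z') = first3 z - first3 z'" "first3 0 = 0"
  "first3 (emb3 u) = u" "first3 (emb2 v) = 0"
  "last2 (z + z') = last2 z + last2 z'" "last2 (r *\<^sub>R z) = r *\<^sub>R last2 z" "last2 (- z) = - last2 z"
  "last2 (z - z') = last2 z - last2 z'" "last2 0 = 0"
  "last2 (emb3 u) = 0" "last2 (emb2 v) = v"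
  by (simp_all add: vec3_eq vec2_eq)



lemma first3_vec [simp]: "first3 (vector [a, b, c, d, e]) = vector [a, b, c]"
  by (simp add: vec3_eq)
lemma last2_vec [simp]: "last2 (vector [a, b, c, d, e]) = vector [d, e]"
  by (simp add: vec2_eq)

lemma mv_lin [simp]:
  "(X + Y) *v v = X *v v + Y *v v" "(X - Y) *v v = X *v v - Y *v v" "(r *\<^sub>R X) *v v = r *\<^sub>R (X *v v)"
  "(- X) *v v = - (X *v v)"
  for X Y :: "real^'n^'m"
  by (simp_all add: vec_eq_iff matrix_vector_mult_def algebra_simps sum.distrib sum_subtractf
     sum_distrib_left sum_negf)

lemma mv3: "A *v vector [p, q, r] = p *\<^sub>R (A *v axis 1 1) + q *\<^sub>R (A *v axis 2 1) + r *\<^sub>R (A *v axis 3 1)"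
  for A :: "real^3^3"
  by (simp add: vec3_eq matrix_vector_mult_def sum_3 axis_def)

lemma mv2: "B *v vector [p, q] = p *\<^sub>R (B *v axis 1 1) + q *\<^sub>R (B *v axis 2 1)"
  for B :: "real^2^2"
  by (simp add: vec2_eq matrix_vector_mult_def sum_2 axis_def)

lemma blockdiag_mv: "blockdiag A B *v z = emb3 (A *v first3 z) + emb2 (B *v last2 z)"
  by (simp add: vec5_eq blockdiag_def matrix_vector_mult_def sum_5 sum_3 sum_2)

lemma wedge_nth [simp]: "wedge u v $ i $ j = u$i * v$j - v$i * u$j"
  by (simp add: wedge_def)

lemma wedge_mv: "wedge u v *v w = (v \<bullet> w) *\<^sub>R u - (u \<bullet> w) *\<^sub>R v"
  by (simp add: vec_eq_iff matrix_vector_mult_def inner_vec_def algebra_simps sum_subtractf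
      sum_distrib_left sum_distrib_right)

lemma wedge_lin [simp]:
  "wedge (u + u') v = wedge u v + wedge u' v" "wedge u (v + v') = wedge u v + wedge u v'"
  "wedge (r *\<^sub>R u) v = r *\<^sub>R wedge u v" "wedge u (r *\<^sub>R v) = r *\<^sub>R wedge u v"
  "wedge (- u) v = - wedge u v" "wedge u (- v) = - wedge u v"
  "wedge (u - u') v = wedge u v - wedge u' v" "wedge u (v - v') = wedge u v - wedge u v'"
  by (simp_all add: vec_eq_iff algebra_simps)

lemma wedge_emb2_emb3: "wedge (emb2 v) (emb3 u) = - wedge (emb3 u) (emb2 v)"
  by (simp add: vec_eq_iff)

lemma conj_wedge: "M ** wedge u v ** transpose M = wedge (M *v u) (M *v v)"
  by (simp add: vec_eq_iff matrix_matrix_mult_def matrix_vector_mult_def transpose_def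
        algebra_simps sum_subtractf sum_distrib_left sum_distrib_right,
      intro allI, subst sum.swap, simp add: mult_ac)

lemma conj_lin:
  "M ** (X + Y) ** transpose M = M ** X ** transpose M + M ** Y ** transpose M"
  "M ** (X - Y) ** transpose M = M ** X ** transpose M - M ** Y ** transpose M"
  "M ** (r *\<^sub>R X) ** transpose M = r *\<^sub>R (M ** X ** transpose M)"
  for M X Y :: "real^'n^'n"
  by (simp_all add: vec_eq_iff matrix_matrix_mult_def algebra_simps sum.distrib sum_subtractf
       sum_distrib_left sum_distrib_right)

definition cross_form :: "real^3 \<Rightarrow> real^5^5" where
  "cross_form u = u$1 *\<^sub>R wedge (axis 2 1) (axis 3 1) + u$2 *\<^sub>R wedge (axis 3 1) (axis 1 1)
     + u$3 *\<^sub>R wedge (axis 1 1) (axis 2 1)"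

lemma wedge_emb3: "wedge (emb3 a) (emb3 b) = cross_form (cross3 a b)"
  by (simp add: vec5_eq cross_form_def cross3_def axis_def algebra_simps)

lemma cross_form_lin [simp]:
  "cross_form (u + v) = cross_form u + cross_form v" "cross_form (r *\<^sub>R u) = r *\<^sub>R cross_form u"
  "cross_form (- u) = - cross_form u" "cross_form (u - v) = cross_form u - cross_form v" "cross_form 0 = 0"
  by (simp_all add: cross_form_def algebra_simps)

lemma cross_form_emb2: "cross_form u *v emb2 w = 0"
  by (simp add: cross_form_def wedge_mv axis_def inner5)

definition rot90 :: "real^2 \<Rightarrow> real^2" where "rot90 v = vector [- v$2, v$1]"
definition rot2 :: "real^2 \<Rightarrow> real^2^2" where "rot2 v = vector [vector [v$1, - v$2], vector [v$2, v$1]]"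
definition cols3 :: "real^3 \<Rightarrow> real^3 \<Rightarrow> real^3 \<Rightarrow> real^3^3" where
  "cols3 u v w = vector [vector [u$1, v$1, w$1], vector [u$2, v$2, w$2], vector [u$3, v$3, w$3]]"

lemma rot90_nth [simp]: "rot90 v $ 1 = - v$2" "rot90 v $ 2 = v$1" by (simp_all add: rot90_def)
lemma rot2_nth [simp]: "rot2 v $ 1 $ 1 = v$1" "rot2 v $ 1 $ 2 = - v$2" "rot2 v $ 2 $ 1 = v$2" "rot2 v $ 2 $ 2 = v$1"
  by (simp_all add: rot2_def)
lemma cols3_nth [simp]:
  "cols3 u v w $ i $ 1 = u $ i" "cols3 u v w $ i $ 2 = v $ i" "cols3 u v w $ i $ 3 = w $ i"
  using exhaust_3[of i] by (auto simp: cols3_def)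



lemma rot90_inner [simp]: "rot90 x \<bullet> rot90 y = x \<bullet> y" "x \<bullet> rot90 x = 0" "rot90 x \<bullet> x = 0"
  by (simp_all add: inner2 algebra_simps)

lemma rot2_cols [simp]: "rot2 v *v axis 1 1 = v" "rot2 v *v axis 2 1 = rot90 v"
  by (simp_all add: vec2_eq matrix_vector_mult_def sum_2 axis_def)



lemma cols3_eq: "cols3 (A *v axis 1 1) (A *v axis 2 1) (A *v axis 3 1) = A"
  unfolding vec_eq_iff forall_3 by (simp add: matrix_vector_mult_def sum_3 axis_def)

lemma wedge_rot90: "wedge (emb2 b) (emb2 (rot90 b)) = (b \<bullet> b) *\<^sub>R wedge (emb2 (axis 1 1)) (emb2 (axis 2 1))"
  by (simp add: vec_eq_iff forall_5 inner2 axis_def algebra_simps)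

lemma norm1_inner: "norm (b::'a::real_inner) = 1 \<Longrightarrow> b \<bullet> b = 1"
  by (simp add: dot_square_norm)

lemma smooth_emb3: "smooth f \<Longrightarrow> smooth (\<lambda>x. emb3 (f x))"
  by (rule smooth_linear) (auto intro!: linearI)
lemma smooth_emb2: "smooth f \<Longrightarrow> smooth (\<lambda>x. emb2 (f x))"
  by (rule smooth_linear) (auto intro!: linearI)
lemma smooth_first3: "smooth f \<Longrightarrow> smooth (\<lambda>x. first3 (f x))"
  by (rule smooth_linear) (auto intro!: linearI)
lemma smooth_last2: "smooth f \<Longrightarrow> smooth (\<lambda>x. last2 (f x))"
  by (rule smooth_linear) (auto intro!: linearI)
lemma smooth_rot90: "smooth f \<Longrightarrow> smooth (\<lambda>x. rot90 (f x))"
  by (rule smooth_linear) (auto intro!: linearI simp: vec2_eq)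
lemma smooth_rot2: "smooth f \<Longrightarrow> smooth (\<lambda>x. rot2 (f x))"
  by (rule smooth_linear) (auto intro!: linearI simp: vec_eq_iff forall_2)
lemma smooth_cross_form: "smooth f \<Longrightarrow> smooth (\<lambda>x. cross_form (f x))"
  by (rule smooth_linear) (auto intro!: linearI)

lemma smooth_wedge: "smooth f \<Longrightarrow> smooth g \<Longrightarrow> smooth (\<lambda>x. wedge (f x) (g x))"
  by (rule smooth_bilinear) (auto simp: bilinear_def intro!: linearI)

lemma smooth_cols3:
  assumes "smooth f" "smooth g" "smooth h"
  shows "smooth (\<lambda>x. cols3 (f x) (g x) (h x))"
proof -
  have "linear (\<lambda>p::(real^3) \<times> (real^3) \<times> (real^3). cols3 (fst p) (fst (snd p)) (snd (snd p)))"
    by (auto intro!: linearI simp: vec_eq_iff forall_3)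
  from smooth_linear[OF this smooth_pair[OF assms(1) smooth_pair[OF assms(2,3)]]]
  show ?thesis by simp
qed

lemma smooth_blockdiag:
  assumes "smooth f" "smooth g"
  shows "smooth (\<lambda>x. blockdiag (f x) (g x))"
proof -
  have "linear (\<lambda>p::(real^3^3) \<times> (real^2^2). blockdiag (fst p) (snd p))"
    by (auto intro!: linearI simp: vec_eq_iff forall_5 blockdiag_def)
  from smooth_linear[OF this smooth_pair[OF assms]]
  show ?thesis by simp
qed

lemmas smooth_intros = smooth_const smooth_id smooth_add smooth_diff smooth_scaleR smooth_fst smooth_snd
  smooth_pair smooth_mv smooth_mm smooth_cross smooth_transpose smooth_emb3 smooth_emb2 smooth_first3 smooth_last2
  smooth_rot90 smooth_rot2 smooth_cross_form smooth_wedge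
  smooth_cols3 smooth_blockdiag

section \<open>The groups SO(2) and SO(3)\<close>

lemma SO_id: "mat 1 \<in> SO"
  by (simp add: SO_def rotation_matrix_def orthogonal_matrix_id)

lemma SO_mult: "A \<in> SO \<Longrightarrow> B \<in> SO \<Longrightarrow> (A ** B :: real^'n^'n) \<in> SO"
  by (simp add: SO_def rotation_matrix_def orthogonal_matrix_mul det_mul)

lemma SO_transpose: "A \<in> SO \<Longrightarrow> (transpose A :: real^'n^'n) \<in> SO"
  by (simp add: SO_def rotation_matrix_def)

lemma SO_inv: "A \<in> SO \<Longrightarrow> A ** transpose A = (mat 1 :: real^'n^'n)" "A \<in> SO \<Longrightarrow> transpose A ** A = mat 1"
  by (simp_all add: SO_def rotation_matrix_def orthogonal_matrix_def)

lemma SO_norm: "A \<in> SO \<Longrightarrow> norm (A *v x) = norm (x :: real^'n)"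
  using orthogonal_transformation_matrix[of "(*v) A"] orthogonal_transformation_norm[of "(*v) A" x]
  by (simp add: SO_def rotation_matrix_def)

lemma exists_SO_map:
  assumes "norm (x::real^'n) = norm y" "2 \<le> CARD('n)"
  shows "\<exists>A\<in>SO. A *v x = y"
proof -
  obtain T where T: "orthogonal_transformation T" "det (matrix T) = 1" "T x = y"
    using rotation_exists[of x y] assms by auto
  then have "matrix T \<in> SO" "matrix T *v x = y"
    by (simp_all add: SO_def rotation_matrix_def orthogonal_transformation_matrix matrix_works
        orthogonal_transformation_linear)
  then show ?thesis by blast
qed

lemma SO3_cross:
  fixes A :: "real^3^3"
  assumes "A \<in> SO"
  shows "cross3 (A *v axis 1 1) (A *v axis 2 1) = A *v axis 3 1"
    "cross3 (A *v axis 2 1) (A *v axis 3 1) = A *v axis 1 1"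
    "cross3 (A *v axis 3 1) (A *v axis 1 1) = A *v axis 2 1"
    "cross3 (A *v axis 2 1) (A *v axis 1 1) = - (A *v axis 3 1)"
    "cross3 (A *v axis 3 1) (A *v axis 2 1) = - (A *v axis 1 1)"
    "cross3 (A *v axis 1 1) (A *v axis 3 1) = - (A *v axis 2 1)"
proof -
  have "rotation_matrix A" using assms by (simp add: SO_def)
  note rot = cross_rotation_matrix[OF this]
  show pos: "cross3 (A *v axis 1 1) (A *v axis 2 1) = A *v axis 3 1"
    "cross3 (A *v axis 2 1) (A *v axis 3 1) = A *v axis 1 1"
    "cross3 (A *v axis 3 1) (A *v axis 1 1) = A *v axis 2 1"
    by (simp_all only: rot cross_basis)
  show "cross3 (A *v axis 2 1) (A *v axis 1 1) = - (A *v axis 3 1)"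
    "cross3 (A *v axis 3 1) (A *v axis 2 1) = - (A *v axis 1 1)"
    "cross3 (A *v axis 1 1) (A *v axis 3 1) = - (A *v axis 2 1)"
    using pos cross_skew by metis+
qed

lemma SO_col_norm: "A \<in> SO \<Longrightarrow> norm (A *v axis i 1) = (1::real)"
  using SO_norm[of A "axis i 1"] by simp

lemma SO2_rot2:
  fixes B :: "real^2^2"
  assumes "B \<in> SO"
  shows "B = rot2 (B *v axis 1 1)" "norm (B *v axis 1 1) = 1"
proof -
  have r: "orthogonal_matrix B" "det B = 1" using assms by (simp_all add: SO_def rotation_matrix_def)
  define p q r' t where "p = B$1$1" "q = B$1$2" "r' = B$2$1" "t = B$2$2"
  have e1: "p*p + r'*r' = 1" "p*q + r'*t = 0" "q*q + t*t = 1"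
    using r(1) unfolding orthogonal_matrix_def
    by (simp_all add: vec_eq_iff forall_2 matrix_matrix_mult_def transpose_def sum_2 mat_def p_q_r'_t_def)
  have e2: "p*t - q*r' = 1" using r(2) by (simp add: det_2 p_q_r'_t_def)
  have "(q + r')^2 + (t - p)^2 = 0"
    using e1 e2 by (simp add: power2_eq_square algebra_simps)
  then have "q = - r'" "t = p" by (simp_all add: sum_power2_eq_zero_iff)
  then show "B = rot2 (B *v axis 1 1)"
    by (simp add: vec_eq_iff forall_2 matrix_vector_mult_def sum_2 axis_def p_q_r'_t_def)
  show "norm (B *v axis 1 1) = 1"
    using SO_col_norm[OF assms] .
qed

lemma rot2_SO:
  assumes "norm v = 1"
  shows "rot2 v \<in> SO"
proof -
  have "v$1 * v$1 + v$2 * v$2 = 1"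
    using assms by (simp add: norm_eq_sqrt_inner inner2)
  then show ?thesis
    unfolding SO_def rotation_matrix_def orthogonal_matrix_def
    by (simp add: vec_eq_iff forall_2 matrix_matrix_mult_def transpose_def sum_2 mat_def det_2 algebra_simps)
qed

lemma diag1_mult: "diag1 (X ** Y) = diag1 X ** diag1 Y"
  by (simp add: diag1_def vec_eq_iff forall_3 matrix_matrix_mult_def sum_3 sum_2)

lemma diag1_transpose: "transpose (diag1 X) = diag1 (transpose X)"
  by (simp add: diag1_def vec_eq_iff forall_3 transpose_def)

lemma diag1_id: "diag1 (mat 1) = mat 1"
  by (simp add: diag1_def vec_eq_iff forall_3 mat_def)

lemma diag1_SO: "X \<in> SO \<Longrightarrow> diag1 X \<in> SO"
proof -
  assume X: "X \<in> SO"
  have "diag1 X ** transpose (diag1 X) = mat 1" "transpose (diag1 X) ** diag1 X = mat 1"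
    by (simp_all add: diag1_transpose diag1_mult[symmetric] SO_inv[OF X] diag1_id)
  moreover have "det (diag1 X) = det X"
    by (simp add: det_3 det_2 diag1_def)
  ultimately show ?thesis using X by (simp add: SO_def rotation_matrix_def orthogonal_matrix_def)
qed

section \<open>The orbit through a point of the fibre over (c,0,0,s,0)\<close>

lemma frame_at_base:
  "fr1 (vector [c, 0, 0, s, 0]) = vector [0, c, -s, 0, 0]"
  "fr2 (vector [c, 0, 0, s, 0]) = vector [0, s, c, 0, 0]"
  "fr3 (vector [c, 0, 0, s, 0]) = vector [-s, 0, 0, c, 0]"
  "fr4 (vector [c, 0, 0, s, 0]) = vector [0, 0, 0, 0, 1]"
  by (simp_all add: fr1_def fr2_def fr3_def fr4_def vec5_eq)

definition asd_form :: "real \<Rightarrow> real \<Rightarrow> real \<Rightarrow> real^5 \<Rightarrow> real^5 \<Rightarrow> real^5 \<Rightarrow> real^5 \<Rightarrow> real^5^5" where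
  "asd_form a1 a2 a3 F1 F2 F3 F4 = a1 *\<^sub>R (wedge F1 F2 - wedge F3 F4) + a2 *\<^sub>R (wedge F1 F3 - wedge F4 F2)
     + a3 *\<^sub>R (wedge F1 F4 - wedge F2 F3)"

text \<open>The image of the base point under (A, B), in terms of the columns of A and the first
  column b of B (the second column of B being rot90 b).\<close>
definition orbit_point :: "real \<Rightarrow> real \<Rightarrow> real \<Rightarrow> real \<Rightarrow> real \<Rightarrow> real^3^3 \<Rightarrow> real^2 \<Rightarrow> (real^5) \<times> (real^5^5)" where
  "orbit_point c s a1 a2 a3 A b = (c *\<^sub>R emb3 (A *v axis 1 1) + s *\<^sub>R emb2 b,
     asd_form a1 a2 a3 (emb3 (c *\<^sub>R (A *v axis 2 1) - s *\<^sub>R (A *v axis 3 1)))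
       (emb3 (s *\<^sub>R (A *v axis 2 1) + c *\<^sub>R (A *v axis 3 1)))
       (emb2 (c *\<^sub>R b) - emb3 (s *\<^sub>R (A *v axis 1 1)))
       (emb2 (rot90 b)))"

lemma act_base_point:
  assumes "B \<in> SO"
  shows "act (blockdiag A B) (fpt (vector [c, 0, 0, s, 0]) a1 a2 a3) = orbit_point c s a1 a2 a3 A (B *v axis 1 1)"
proof -
  have "B *v axis 2 1 = rot90 (B *v axis 1 1)"
    using SO2_rot2(1)[OF assms] rot2_cols(2) by metis
  then show ?thesis
    by (simp add: act_def fpt_def om1_def om2_def om3_def asd_form_def orbit_point_def conj_lin conj_wedge
        blockdiag_mv frame_at_base mv3 mv2 algebra_simps)
qed

lemma orbit32_base:
  "orbit32 (fpt (vector [c, 0, 0, s, 0]) a1 a2 a3) = {orbit_point c s a1 a2 a3 A b | A b. A \<in> SO \<and> norm b = 1}"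
proof (rule set_eqI, rule iffI)
  fix x assume "x \<in> orbit32 (fpt (vector [c, 0, 0, s, 0]) a1 a2 a3)"
  then obtain A B where "A \<in> SO" "B \<in> SO" "x = act (blockdiag A B) (fpt (vector [c, 0, 0, s, 0]) a1 a2 a3)"
    unfolding orbit32_def by blast
  then show "x \<in> {orbit_point c s a1 a2 a3 A b | A b. A \<in> SO \<and> norm b = 1}"
    using act_base_point SO2_rot2(2) by blast
next
  fix x assume "x \<in> {orbit_point c s a1 a2 a3 A b | A b. A \<in> SO \<and> norm b = 1}"
  then obtain A b where Ab: "A \<in> SO" "norm b = 1" "x = orbit_point c s a1 a2 a3 A b" by blast
  then have "x = act (blockdiag A (rot2 b)) (fpt (vector [c, 0, 0, s, 0]) a1 a2 a3)"
    using act_base_point[OF rot2_SO[OF Ab(2)]] by simp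
  then show "x \<in> orbit32 (fpt (vector [c, 0, 0, s, 0]) a1 a2 a3)"
    unfolding orbit32_def using Ab rot2_SO by blast
qed

lemma smooth_orbit_map: "smooth (\<lambda>z::(real^3^3) \<times> (real^2^2). act (blockdiag (fst z) (snd z)) p)"
  unfolding act_def by (intro smooth_intros)

section \<open>The six orbit types\<close>

abbreviation E4 :: "real^5" where "E4 \<equiv> emb2 (axis 1 1)"
abbreviation E5 :: "real^5" where "E5 \<equiv> emb2 (axis 2 1)"

subsection \<open>Base point e_4, zero form: the circle\<close>

text \<open>Only the R^2-block moves the point (e_4, 0).\<close>
lemma orbit_diffeo_S1:
  "diffeomorphic_sets (orbit32 (fpt (vector [0, 0, 0, 1, 0]) 0 0 0)) (sphere (0::real^2) 1)"
proof (rule diffeomorphic_setsI[where F="\<lambda>x. last2 (fst x)" and G="\<lambda>v. (emb2 v, 0)"])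
  show "smooth (\<lambda>x::(real^5) \<times> (real^5^5). last2 (fst x))"
    "smooth (\<lambda>v::real^2. (emb2 v, 0::real^5^5))"
    by (intro smooth_intros)+
  fix x assume "x \<in> orbit32 (fpt (vector [0, 0, 0, 1, 0]) 0 0 0)"
  then obtain A b where "norm b = 1" "x = orbit_point 0 1 0 0 0 A b"
    unfolding orbit32_base by blast
  then show "(emb2 (last2 (fst x)), 0) = x" "last2 (fst x) \<in> sphere 0 1"
    by (simp_all add: orbit_point_def asd_form_def)
next
  fix y :: "real^2" assume y: "y \<in> sphere 0 1"
  show "last2 (fst (emb2 y, 0::real^5^5)) = y" by simp
  have "(emb2 y, 0) = orbit_point 0 1 0 0 0 (mat 1) y" by (simp add: orbit_point_def asd_form_def)
  then show "(emb2 y, 0) \<in> orbit32 (fpt (vector [0, 0, 0, 1, 0]) 0 0 0)"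
    unfolding orbit32_base using y SO_id by auto
qed

subsection \<open>Base point e_1, a_2 = a_3 = 0: the 2-sphere\<close>

text \<open>Here the orbit point only depends on the first column of A, which sweeps out S^2.\<close>
lemma orbit_point_pole_a1:
  assumes "A \<in> SO" "norm b = 1"
  shows "orbit_point 1 0 a1 0 0 A b = (emb3 (A *v axis 1 1), a1 *\<^sub>R (cross_form (A *v axis 1 1) - wedge E4 E5))"
  using assms by (simp add: orbit_point_def asd_form_def wedge_emb3 SO3_cross wedge_rot90 norm1_inner)

lemma orbit_diffeo_S2:
  "diffeomorphic_sets (orbit32 (fpt (vector [1, 0, 0, 0, 0]) a1 0 0)) (sphere (0::real^3) 1)"
proof (rule diffeomorphic_setsI[where F="\<lambda>x. first3 (fst x)"
      and G="\<lambda>u. (emb3 u, a1 *\<^sub>R (cross_form u - wedge E4 E5))"])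
  show "smooth (\<lambda>x::(real^5) \<times> (real^5^5). first3 (fst x))"
    "smooth (\<lambda>u. (emb3 u, a1 *\<^sub>R (cross_form u - wedge E4 E5)))"
    by (intro smooth_intros)+
  fix x assume "x \<in> orbit32 (fpt (vector [1, 0, 0, 0, 0]) a1 0 0)"
  then obtain A b where "A \<in> SO" "norm b = 1" "x = orbit_point 1 0 a1 0 0 A b"
    using orbit32_base[of 1 0 a1 0 0] by auto
  then show "(emb3 (first3 (fst x)), a1 *\<^sub>R (cross_form (first3 (fst x)) - wedge E4 E5)) = x"
    "first3 (fst x) \<in> sphere 0 1"
    by (simp_all add: orbit_point_pole_a1 SO_col_norm)
next
  fix u :: "real^3" assume u: "u \<in> sphere 0 1"
  show "first3 (fst (emb3 u, a1 *\<^sub>R (cross_form u - wedge E4 E5))) = u" by simp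
  obtain A where A: "A \<in> SO" "A *v axis 1 1 = u"
    using exists_SO_map[of "axis 1 1" u] u by (auto simp: norm_axis_1)
  then have "(emb3 u, a1 *\<^sub>R (cross_form u - wedge E4 E5)) = orbit_point 1 0 a1 0 0 A (axis 1 1)"
    using orbit_point_pole_a1[OF A(1) norm_axis_1] by simp
  then show "(emb3 u, a1 *\<^sub>R (cross_form u - wedge E4 E5)) \<in> orbit32 (fpt (vector [1, 0, 0, 0, 0]) a1 0 0)"
    unfolding orbit32_base[of 1 0 a1 0 0] using A norm_axis_1 by blast
qed

subsection \<open>Generic base point, a_2 = a_3 = 0: S^2 x S^1\<close>

definition orbit_point_a1 :: "real \<Rightarrow> real \<Rightarrow> real \<Rightarrow> (real^3) \<times> (real^2) \<Rightarrow> (real^5) \<times> (real^5^5)" where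
  "orbit_point_a1 c s a1 p = (c *\<^sub>R emb3 (fst p) + s *\<^sub>R emb2 (snd p),
      a1 *\<^sub>R (cross_form (fst p) - wedge (emb2 (c *\<^sub>R snd p) - emb3 (s *\<^sub>R fst p)) (emb2 (rot90 (snd p)))))"

lemma cross_rotated_pair:
  "cross3 (c *\<^sub>R u - s *\<^sub>R v) (s *\<^sub>R u + c *\<^sub>R v) = (c * c + s * s) *\<^sub>R cross3 u v"
  by (simp add: vec3_eq cross_components algebra_simps)

lemma orbit_point_eq_a1:
  assumes "A \<in> SO" "c * c + s * s = 1"
  shows "orbit_point c s a1 0 0 A b = orbit_point_a1 c s a1 (A *v axis 1 1, b)"
proof -
  have "wedge (emb3 (c *\<^sub>R (A *v axis 2 1) - s *\<^sub>R (A *v axis 3 1)))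
       (emb3 (s *\<^sub>R (A *v axis 2 1) + c *\<^sub>R (A *v axis 3 1))) = cross_form (A *v axis 1 1)"
    unfolding wedge_emb3 cross_rotated_pair using assms by (simp add: SO3_cross)
  then show ?thesis by (simp add: orbit_point_def asd_form_def orbit_point_a1_def)
qed

lemma orbit_diffeo_S2_S1_generic:
  assumes "0 < c" "0 < s" "c * c + s * s = 1"
  shows "diffeomorphic_sets (orbit32 (fpt (vector [c, 0, 0, s, 0]) a1 0 0))
     (sphere (0::real^3) 1 \<times> sphere (0::real^2) 1)"
proof (rule diffeomorphic_setsI[where F="\<lambda>x. (inverse c *\<^sub>R first3 (fst x), inverse s *\<^sub>R last2 (fst x))"
      and G="orbit_point_a1 c s a1"])
  show "smooth (\<lambda>x::(real^5) \<times> (real^5^5). (inverse c *\<^sub>R first3 (fst x), inverse s *\<^sub>R last2 (fst x)))"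
    "smooth (orbit_point_a1 c s a1)"
    unfolding orbit_point_a1_def by (intro smooth_intros)+
  fix x assume "x \<in> orbit32 (fpt (vector [c, 0, 0, s, 0]) a1 0 0)"
  then obtain A b where Ab: "A \<in> SO" "norm b = 1" "x = orbit_point c s a1 0 0 A b"
    using orbit32_base[of c s a1 0 0] by auto
  have fx: "(inverse c *\<^sub>R first3 (fst x), inverse s *\<^sub>R last2 (fst x)) = (A *v axis 1 1, b)"
    using Ab assms by (simp add: orbit_point_def)
  show "orbit_point_a1 c s a1 (inverse c *\<^sub>R first3 (fst x), inverse s *\<^sub>R last2 (fst x)) = x"
    unfolding fx using orbit_point_eq_a1[OF Ab(1) assms(3)] Ab by simp
  show "(inverse c *\<^sub>R first3 (fst x), inverse s *\<^sub>R last2 (fst x)) \<in> sphere 0 1 \<times> sphere 0 1"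
    unfolding fx using Ab SO_col_norm by simp
next
  fix y :: "(real^3) \<times> (real^2)" assume y: "y \<in> sphere 0 1 \<times> sphere 0 1"
  show "(inverse c *\<^sub>R first3 (fst (orbit_point_a1 c s a1 y)), inverse s *\<^sub>R last2 (fst (orbit_point_a1 c s a1 y))) = y"
    using assms by (simp add: orbit_point_a1_def)
  have ny: "norm (fst y) = 1" "norm (snd y) = 1" using y by auto
  obtain A where A: "A \<in> SO" "A *v axis 1 1 = fst y"
    using exists_SO_map[of "axis 1 1" "fst y"] ny by (auto simp: norm_axis_1)
  then have "orbit_point_a1 c s a1 y = orbit_point c s a1 0 0 A (snd y)"
    using orbit_point_eq_a1[OF A(1) assms(3)] by simp
  then show "orbit_point_a1 c s a1 y \<in> orbit32 (fpt (vector [c, 0, 0, s, 0]) a1 0 0)"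
    unfolding orbit32_base[of c s a1 0 0] using A ny by blast
qed

subsection \<open>Base point e_4, nonzero form: S^2 x S^1\<close>

text \<open>At x = e_4 the form is determined by the vector v = A (a_1, a_2, -a_3), of constant
  length |a|, and by b; so the orbit is the product of a sphere of radius |a| and S^1.\<close>
definition orbit_point_e4 :: "(real^3) \<times> (real^2) \<Rightarrow> (real^5) \<times> (real^5^5)" where
  "orbit_point_e4 p = (emb2 (snd p), cross_form (fst p) + wedge (emb3 (fst p)) (emb2 (rot90 (snd p))))"

lemma orbit_point_eq_e4:
  assumes "A \<in> SO"
  shows "orbit_point 0 1 a1 a2 a3 A b = orbit_point_e4 (A *v vector [a1, a2, - a3], b)"
  using assms by (simp add: orbit_point_def asd_form_def orbit_point_e4_def mv3 wedge_emb3 SO3_cross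
      wedge_emb2_emb3 algebra_simps)

lemma orbit_point_e4_contract:
  assumes "norm b = 1"
  shows "first3 (snd (orbit_point_e4 (v, b)) *v emb2 (rot90 (last2 (fst (orbit_point_e4 (v, b)))))) = v"
  using assms by (simp add: orbit_point_e4_def cross_form_emb2 wedge_mv norm1_inner)

lemma orbit_diffeo_S2_S1_e4:
  assumes "(a1, a2, a3) \<noteq> (0, 0, 0)"
  shows "diffeomorphic_sets (orbit32 (fpt (vector [0, 0, 0, 1, 0]) a1 a2 a3))
     (sphere (0::real^3) 1 \<times> sphere (0::real^2) 1)"
proof -
  define u0 :: "real^3" where "u0 = vector [a1, a2, - a3]"
  define r where "r = norm u0"
  have r: "0 < r"
    using assms by (auto simp: r_def u0_def vec3_eq)
  define F where "F x = (inverse r *\<^sub>R first3 (snd x *v emb2 (rot90 (last2 (fst x)))), last2 (fst x))" for x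
  show ?thesis
  proof (rule diffeomorphic_setsI[where F=F and G="\<lambda>p. orbit_point_e4 (r *\<^sub>R fst p, snd p)"])
    show "smooth F" "smooth (\<lambda>p::(real^3) \<times> (real^2). orbit_point_e4 (r *\<^sub>R fst p, snd p))"
      unfolding F_def orbit_point_e4_def by (intro smooth_intros)+
    fix x assume "x \<in> orbit32 (fpt (vector [0, 0, 0, 1, 0]) a1 a2 a3)"
    then obtain A b where Ab: "A \<in> SO" "norm b = 1" "x = orbit_point 0 1 a1 a2 a3 A b"
      using orbit32_base[of 0 1 a1 a2 a3] by auto
    have x: "x = orbit_point_e4 (A *v u0, b)" using orbit_point_eq_e4[OF Ab(1)] Ab(3) by (simp add: u0_def)
    then have Fx: "F x = (inverse r *\<^sub>R (A *v u0), b)"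
      using orbit_point_e4_contract[OF Ab(2), of "A *v u0"] by (simp add: F_def orbit_point_e4_def)
    then show "orbit_point_e4 (r *\<^sub>R fst (F x), snd (F x)) = x"
      using r x by simp
    have "norm (A *v u0) = r" using SO_norm[OF Ab(1)] by (simp add: r_def)
    then show "F x \<in> sphere 0 1 \<times> sphere 0 1"
      using Fx Ab(2) r by simp
  next
    fix y :: "(real^3) \<times> (real^2)" assume y: "y \<in> sphere 0 1 \<times> sphere 0 1"
    have ny: "norm (fst y) = 1" "norm (snd y) = 1" using y by auto
    show "F (orbit_point_e4 (r *\<^sub>R fst y, snd y)) = y"
      using orbit_point_e4_contract[OF ny(2), of "r *\<^sub>R fst y"] r
      by (simp add: F_def orbit_point_e4_def)
    have "norm u0 = norm (r *\<^sub>R fst y)" using ny by (simp add: r_def)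
    then obtain A where A: "A \<in> SO" "A *v u0 = r *\<^sub>R fst y" using exists_SO_map by fastforce
    then have "orbit_point_e4 (r *\<^sub>R fst y, snd y) = orbit_point 0 1 a1 a2 a3 A (snd y)"
      using orbit_point_eq_e4[OF A(1)] by (simp add: u0_def)
    then show "orbit_point_e4 (r *\<^sub>R fst y, snd y) \<in> orbit32 (fpt (vector [0, 0, 0, 1, 0]) a1 a2 a3)"
      unfolding orbit32_base[of 0 1 a1 a2 a3] using A ny by blast
  qed
qed

subsection \<open>Generic base point, (a_2, a_3) <> 0: the group itself\<close>

text \<open>For 0 < c < 1 the whole pair (A, B) can be read off from the orbit point: the base point
  gives the first column of A and b; contracting the form with rot90 b gives
  a_1 s A e_1 + p A e_2 + q A e_3 with (p, q) a rotation of (a_2, a_3), hence nonzero; the cross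
  product with A e_1 then separates A e_2 and A e_3.\<close>
definition group_coords :: "real \<Rightarrow> real \<Rightarrow> real \<Rightarrow> real \<Rightarrow> real \<Rightarrow> (real^5) \<times> (real^5^5) \<Rightarrow> (real^3^3) \<times> (real^2^2)" where
  "group_coords c s a1 a2 a3 x =
    (let e = inverse c *\<^sub>R first3 (fst x); b = inverse s *\<^sub>R last2 (fst x);
         w = first3 (snd x *v emb2 (rot90 b)) - (a1 * s) *\<^sub>R e;
         p = a2 * s + a3 * c; q = a2 * c - a3 * s; n = p * p + q * q
     in (cols3 e (inverse n *\<^sub>R (p *\<^sub>R w - q *\<^sub>R cross3 e w)) (inverse n *\<^sub>R (q *\<^sub>R w + p *\<^sub>R cross3 e w)),
         rot2 b))"

lemma smooth_group_coords: "smooth (group_coords c s a1 a2 a3)"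
  unfolding group_coords_def Let_def by (intro smooth_intros)+

lemma group_coords_orbit_point:
  assumes A: "A \<in> SO" and b: "norm b = 1" and cs: "0 < c" "0 < s" "c * c + s * s = 1"
    and a: "(a2, a3) \<noteq> (0, 0)"
  shows "group_coords c s a1 a2 a3 (orbit_point c s a1 a2 a3 A b) = (A, rot2 b)"
proof -
  define p where "p = a2 * s + a3 * c"
  define q where "q = a2 * c - a3 * s"
  define n where "n = p * p + q * q"
  have "n = (a2 * a2 + a3 * a3) * (c * c + s * s)" by (simp add: n_def p_def q_def algebra_simps)
  then have n0: "n \<noteq> 0" using cs a by (simp add: sum_squares_eq_zero_iff)
  let ?x = "orbit_point c s a1 a2 a3 A b"
  have e: "inverse c *\<^sub>R first3 (fst ?x) = A *v axis 1 1" using cs by (simp add: orbit_point_def)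
  have b': "inverse s *\<^sub>R last2 (fst ?x) = b" using cs by (simp add: orbit_point_def)
  have w: "first3 (snd ?x *v emb2 (rot90 b)) - (a1 * s) *\<^sub>R (A *v axis 1 1) = p *\<^sub>R (A *v axis 2 1) + q *\<^sub>R (A *v axis 3 1)"
    using norm1_inner[OF b]
    by (simp add: orbit_point_def asd_form_def wedge_mv inner_add_left inner_diff_left p_def q_def algebra_simps)
  have cr: "cross3 (A *v axis 1 1) (p *\<^sub>R (A *v axis 2 1) + q *\<^sub>R (A *v axis 3 1)) = p *\<^sub>R (A *v axis 3 1) - q *\<^sub>R (A *v axis 2 1)"
    using A by (simp add: cross_add_right cross_mult_right SO3_cross)
  have col2: "p *\<^sub>R (p *\<^sub>R (A *v axis 2 1) + q *\<^sub>R (A *v axis 3 1)) - q *\<^sub>R (p *\<^sub>R (A *v axis 3 1) - q *\<^sub>R (A *v axis 2 1))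
       = n *\<^sub>R (A *v axis 2 1)"
    and col3: "q *\<^sub>R (p *\<^sub>R (A *v axis 2 1) + q *\<^sub>R (A *v axis 3 1)) + p *\<^sub>R (p *\<^sub>R (A *v axis 3 1) - q *\<^sub>R (A *v axis 2 1))
       = n *\<^sub>R (A *v axis 3 1)"
    by (simp_all add: n_def algebra_simps)
  have "group_coords c s a1 a2 a3 ?x = (cols3 (A *v axis 1 1) (A *v axis 2 1) (A *v axis 3 1), rot2 b)"
    unfolding group_coords_def Let_def e b' w[unfolded p_def q_def] cr[unfolded p_def q_def]
    using col2[unfolded n_def p_def q_def] col3[unfolded n_def p_def q_def] n0[unfolded n_def p_def q_def]
    by simp
  then show ?thesis by (simp add: cols3_eq)
qed

lemma orbit_diffeo_group:
  assumes cs: "0 < c" "0 < s" "c * c + s * s = 1" and a: "(a2, a3) \<noteq> (0, 0)"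
  shows "diffeomorphic_sets (orbit32 (fpt (vector [c, 0, 0, s, 0]) a1 a2 a3)) G32"
proof -
  define p0 where "p0 = fpt (vector [c, 0, 0, s, 0]) a1 a2 a3"
  have inverse: "group_coords c s a1 a2 a3 (act (blockdiag A B) p0) = (A, B)" if "A \<in> SO" "B \<in> SO" for A B
    using act_base_point[OF that(2)] group_coords_orbit_point[OF that(1) SO2_rot2(2)[OF that(2)] cs a]
      SO2_rot2(1)[OF that(2)] by (simp add: p0_def)
  show ?thesis
    unfolding p0_def[symmetric]
  proof (rule diffeomorphic_setsI[OF smooth_group_coords smooth_orbit_map])
    fix x assume "x \<in> orbit32 p0"
    then obtain A B where "A \<in> SO" "B \<in> SO" "x = act (blockdiag A B) p0"
      unfolding orbit32_def by blast
    then show "act (blockdiag (fst (group_coords c s a1 a2 a3 x)) (snd (group_coords c s a1 a2 a3 x))) p0 = x"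
      "group_coords c s a1 a2 a3 x \<in> G32"
      using inverse by (simp_all add: G32_def)
  next
    fix y assume "y \<in> G32"
    then obtain A B where "A \<in> SO" "B \<in> SO" "y = (A, B)" unfolding G32_def by blast
    then show "group_coords c s a1 a2 a3 (act (blockdiag (fst y) (snd y)) p0) = y"
      "act (blockdiag (fst y) (snd y)) p0 \<in> orbit32 p0"
      using inverse unfolding orbit32_def by auto
  qed
qed

subsection \<open>Base point e_1, (a_2, a_3) <> 0: the quotient by the diagonal SO(2)\<close>

text \<open>At x = e_1 the orbit point depends on (A, B) only through the frame
  A diag(1, B^T), and it determines this frame.  So the orbit map factors through
  (A, B) \<mapsto> A diag(1, B^T), whose fibres are the cosets of {(diag(1,h), h)}.\<close>
definition pole_frame :: "(real^3^3) \<times> (real^2^2) \<Rightarrow> real^3^3" where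
  "pole_frame g = fst g ** diag1 (transpose (snd g))"

definition pole_point :: "real \<Rightarrow> real \<Rightarrow> real \<Rightarrow> real^3^3 \<Rightarrow> (real^5) \<times> (real^5^5)" where
  "pole_point a1 a2 a3 R = (emb3 (R *v axis 1 1),
     a1 *\<^sub>R (cross_form (R *v axis 1 1) - wedge E4 E5)
     + a2 *\<^sub>R (wedge (emb3 (R *v axis 2 1)) E4 + wedge (emb3 (R *v axis 3 1)) E5)
     + a3 *\<^sub>R (wedge (emb3 (R *v axis 2 1)) E5 - wedge (emb3 (R *v axis 3 1)) E4))"

text \<open>Inverse of pole_point: contracting the form with e_4 and e_5 gives
  a_2 R e_2 - a_3 R e_3 and a_2 R e_3 + a_3 R e_2, from which R e_2, R e_3 are solved.\<close>
definition pole_frame_coords :: "real \<Rightarrow> real \<Rightarrow> (real^5) \<times> (real^5^5) \<Rightarrow> real^3^3" where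
  "pole_frame_coords a2 a3 x = (let z4 = first3 (snd x *v E4); z5 = first3 (snd x *v E5); n = a2 * a2 + a3 * a3 in
     cols3 (first3 (fst x)) (inverse n *\<^sub>R (a2 *\<^sub>R z4 + a3 *\<^sub>R z5)) (inverse n *\<^sub>R (a2 *\<^sub>R z5 - a3 *\<^sub>R z4)))"

lemma smooth_pole_frame_coords: "smooth (pole_frame_coords a2 a3)"
  unfolding pole_frame_coords_def Let_def by (intro smooth_intros)+

lemma pole_frame_cols:
  fixes A :: "real^3^3"
  shows "(A ** diag1 (transpose (rot2 b))) *v axis 1 1 = A *v axis 1 1"
  "(A ** diag1 (transpose (rot2 b))) *v axis 2 1 = b$1 *\<^sub>R (A *v axis 2 1) - b$2 *\<^sub>R (A *v axis 3 1)"
  "(A ** diag1 (transpose (rot2 b))) *v axis 3 1 = b$2 *\<^sub>R (A *v axis 2 1) + b$1 *\<^sub>R (A *v axis 3 1)"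
proof -
  have d: "diag1 (transpose (rot2 b)) *v axis 1 1 = vector [1, 0, 0]"
    "diag1 (transpose (rot2 b)) *v axis 2 1 = vector [0, b$1, - b$2]"
    "diag1 (transpose (rot2 b)) *v axis 3 1 = vector [0, b$2, b$1]"
    by (simp_all add: vec3_eq diag1_def matrix_vector_mult_def sum_3 axis_def transpose_def)
  show "(A ** diag1 (transpose (rot2 b))) *v axis 1 1 = A *v axis 1 1"
    "(A ** diag1 (transpose (rot2 b))) *v axis 2 1 = b$1 *\<^sub>R (A *v axis 2 1) - b$2 *\<^sub>R (A *v axis 3 1)"
    "(A ** diag1 (transpose (rot2 b))) *v axis 3 1 = b$2 *\<^sub>R (A *v axis 2 1) + b$1 *\<^sub>R (A *v axis 3 1)"
    unfolding matrix_vector_mul_assoc[symmetric] d mv3 by (simp_all add: algebra_simps)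
qed

lemma wedge_rotate_E45:
  "wedge (emb3 x) (emb2 b) - wedge (emb2 (rot90 b)) (emb3 y) =
     wedge (emb3 (b$1 *\<^sub>R x - b$2 *\<^sub>R y)) E4 + wedge (emb3 (b$2 *\<^sub>R x + b$1 *\<^sub>R y)) E5"
  "wedge (emb3 x) (emb2 (rot90 b)) - wedge (emb3 y) (emb2 b) =
     wedge (emb3 (b$1 *\<^sub>R x - b$2 *\<^sub>R y)) E5 - wedge (emb3 (b$2 *\<^sub>R x + b$1 *\<^sub>R y)) E4"
  by (simp_all add: vec_eq_iff forall_5 axis_def algebra_simps)

lemma act_pole:
  assumes "g \<in> G32"
  shows "act (blockdiag (fst g) (snd g)) (fpt (vector [1, 0, 0, 0, 0]) a1 a2 a3) = pole_point a1 a2 a3 (pole_frame g)"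
proof -
  obtain A B where g: "g = (A, B)" "A \<in> SO" "B \<in> SO" using assms unfolding G32_def by auto
  define b where "b = B *v axis 1 1"
  have B: "B = rot2 b" "norm b = 1" using SO2_rot2[OF g(3)] by (simp_all add: b_def)
  have "wedge (emb3 (A *v axis 2 1)) (emb3 (A *v axis 3 1)) = cross_form (A *v axis 1 1)"
    using g(2) by (simp add: wedge_emb3 SO3_cross)
  moreover have "wedge (emb2 b) (emb2 (rot90 b)) = wedge E4 E5"
    using B(2) by (simp add: wedge_rot90 norm1_inner)
  ultimately show ?thesis
    using act_base_point[OF g(3), of A 1 0 a1 a2 a3] wedge_rotate_E45[of "A *v axis 2 1" b "A *v axis 3 1"]
    unfolding g(1) pole_frame_def B(1)[symmetric] b_def[symmetric]
    by (simp add: B(1) orbit_point_def pole_point_def asd_form_def pole_frame_cols)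
qed

lemma pole_frame_coords_inverse:
  assumes "(a2, a3) \<noteq> (0, 0)"
  shows "pole_frame_coords a2 a3 (pole_point a1 a2 a3 R) = R"
proof -
  define n where "n = a2 * a2 + a3 * a3"
  have n0: "n \<noteq> 0" using assms by (auto simp: n_def sum_squares_eq_zero_iff)
  have E: "E4 \<bullet> E4 = 1" "E5 \<bullet> E5 = 1" "E4 \<bullet> E5 = 0" "E5 \<bullet> E4 = 0"
    by (simp_all add: inner2 axis_def)
  have z4: "first3 (snd (pole_point a1 a2 a3 R) *v E4) = a2 *\<^sub>R (R *v axis 2 1) - a3 *\<^sub>R (R *v axis 3 1)"
    and z5: "first3 (snd (pole_point a1 a2 a3 R) *v E5) = a2 *\<^sub>R (R *v axis 3 1) + a3 *\<^sub>R (R *v axis 2 1)"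
    by (simp_all add: pole_point_def wedge_mv cross_form_emb2 E inner_axis_axis)
  have col2: "a2 *\<^sub>R (a2 *\<^sub>R (R *v axis 2 1) - a3 *\<^sub>R (R *v axis 3 1)) + a3 *\<^sub>R (a2 *\<^sub>R (R *v axis 3 1) + a3 *\<^sub>R (R *v axis 2 1))
     = n *\<^sub>R (R *v axis 2 1)"
    and col3: "a2 *\<^sub>R (a2 *\<^sub>R (R *v axis 3 1) + a3 *\<^sub>R (R *v axis 2 1)) - a3 *\<^sub>R (a2 *\<^sub>R (R *v axis 2 1) - a3 *\<^sub>R (R *v axis 3 1))
     = n *\<^sub>R (R *v axis 3 1)"
    by (simp_all add: n_def algebra_simps)
  have "pole_frame_coords a2 a3 (pole_point a1 a2 a3 R) = cols3 (R *v axis 1 1) (R *v axis 2 1) (R *v axis 3 1)"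
    unfolding pole_frame_coords_def Let_def z4 z5 using col2[unfolded n_def] col3[unfolded n_def] n0[unfolded n_def]
    by (simp add: pole_point_def)
  then show ?thesis by (simp add: cols3_eq)
qed

lemma pole_frame_SO: "g \<in> G32 \<Longrightarrow> pole_frame g \<in> SO"
  unfolding G32_def pole_frame_def by (auto intro!: SO_mult diag1_SO SO_transpose)

lemma pole_frame_fibres:
  assumes "g \<in> G32" "g' \<in> G32"
  shows "pole_frame g = pole_frame g' \<longleftrightarrow> (\<exists>h\<in>H_diag. g' = mult32 g h)"
proof -
  obtain A B where g: "g = (A, B)" "A \<in> SO" "B \<in> SO" using assms(1) unfolding G32_def by auto
  obtain A' B' where g': "g' = (A', B')" "A' \<in> SO" "B' \<in> SO" using assms(2) unfolding G32_def by auto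
  show ?thesis
  proof
    assume e: "pole_frame g = pole_frame g'"
    define k where "k = transpose B ** B'"
    have "B ** k = B'" using SO_inv(1)[OF g(3)] by (simp add: k_def matrix_mul_assoc)
    moreover have "A ** diag1 k = A'"
    proof -
      have "A ** diag1 k = (A ** diag1 (transpose B)) ** diag1 B'"
        by (simp add: k_def diag1_mult matrix_mul_assoc)
      also have "\<dots> = (A' ** diag1 (transpose B')) ** diag1 B'"
        using e g g' by (simp add: pole_frame_def)
      also have "\<dots> = A'"
        by (simp add: matrix_mul_assoc[symmetric] diag1_mult[symmetric] SO_inv(2)[OF g'(3)] diag1_id)
      finally show ?thesis .
    qed
    ultimately have "g' = mult32 g (diag1 k, k)" using g g' by (simp add: mult32_def)
    moreover have "(diag1 k, k) \<in> H_diag"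
      using g g' SO_mult SO_transpose unfolding H_diag_def k_def by blast
    ultimately show "\<exists>h\<in>H_diag. g' = mult32 g h" by blast
  next
    assume "\<exists>h\<in>H_diag. g' = mult32 g h"
    then obtain k where k: "k \<in> SO" "g' = mult32 g (diag1 k, k)" unfolding H_diag_def by blast
    have "pole_frame g' = A ** (diag1 (k ** transpose k)) ** diag1 (transpose B)"
      using k g by (simp add: pole_frame_def mult32_def matrix_transpose_mul diag1_mult matrix_mul_assoc)
    also have "\<dots> = pole_frame g" using SO_inv(1)[OF k(1)] g by (simp add: diag1_id pole_frame_def)
    finally show "pole_frame g = pole_frame g'" by simp
  qed
qed

lemma orbit_quotient_pole:
  assumes a: "(a2, a3) \<noteq> (0, 0)"
  shows "diffeomorphic_quotient (orbit32 (fpt (vector [1, 0, 0, 0, 0]) a1 a2 a3)) G32 mult32 H_diag"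
proof -
  define proj where "proj g = act (blockdiag (fst g) (snd g)) (fpt (vector [1, 0, 0, 0, 0]) a1 a2 a3)" for g
  define Psi where "Psi m = (pole_frame_coords a2 a3 m, mat 1 :: real^2^2)" for m
  have proj: "proj g = pole_point a1 a2 a3 (pole_frame g)" if "g \<in> G32" for g
    using act_pole[OF that] by (simp add: proj_def)
  have orbit: "orbit32 (fpt (vector [1, 0, 0, 0, 0]) a1 a2 a3) = proj ` G32"
    unfolding orbit32_def proj_def G32_def by force
  show ?thesis
    unfolding orbit
  proof (rule diffeomorphic_quotientI[where Psi=Psi, OF _ refl])
    show "smooth proj" "smooth Psi"
      unfolding proj_def Psi_def by (intro smooth_orbit_map smooth_intros smooth_pole_frame_coords)+
    show "proj g = proj g' \<longleftrightarrow> (\<exists>h\<in>H_diag. g' = mult32 g h)" if "g \<in> G32" "g' \<in> G32" for g g'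
      using proj[OF that(1)] proj[OF that(2)] pole_frame_coords_inverse[OF a] pole_frame_fibres[OF that]
      by metis
    fix m assume "m \<in> proj ` G32"
    then obtain g where g: "g \<in> G32" "m = proj g" by blast
    then have Psi_m: "Psi m = (pole_frame g, mat 1)"
      using proj pole_frame_coords_inverse[OF a] by (simp add: Psi_def)
    then show "Psi m \<in> G32"
      using pole_frame_SO[OF g(1)] SO_id by (simp add: G32_def)
    have "pole_frame (Psi m) = pole_frame g" by (simp add: Psi_m pole_frame_def diag1_id)
    then show "proj (Psi m) = m"
      using proj[OF \<open>Psi m \<in> G32\<close>] proj[OF g(1)] g(2) by metis
  qed
qed

text \<open>Every point can be moved by SO(3) x SO(2) into the fibre over (x_1, 0, 0, x_4, 0) with
  x_1, x_4 >= 0: rotate x_{123} and x_{45} separately onto the first axes.\<close>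
lemma normal_form:
  "\<exists>A B x1 x4. A \<in> SO \<and> B \<in> SO \<and> x1 \<ge> 0 \<and> x4 \<ge> 0 \<and>
     fst (act (blockdiag A B) p) = vector [x1, 0, 0, x4, 0]"
proof -
  define x where "x = fst p"
  obtain A :: "real^3^3" where A: "A \<in> SO" "A *v first3 x = norm (first3 x) *\<^sub>R axis 1 1"
    using exists_SO_map[of "first3 x" "norm (first3 x) *\<^sub>R axis 1 1"] by auto
  obtain B :: "real^2^2" where B: "B \<in> SO" "B *v last2 x = norm (last2 x) *\<^sub>R axis 1 1"
    using exists_SO_map[of "last2 x" "norm (last2 x) *\<^sub>R axis 1 1"] by auto
  have "fst (act (blockdiag A B) p) = vector [norm (first3 x), 0, 0, norm (last2 x), 0]"
    by (simp add: act_def x_def[symmetric] blockdiag_mv A B vec5_eq axis_def)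
  then show ?thesis
    using A B by (intro exI[of _ A] exI[of _ B] exI[of _ "norm (first3 x)"] exI[of _ "norm (last2 x)"]) auto
qed

lemma base_point_cases:
  fixes x1 x4 :: real
  assumes "x1 \<ge> 0" "x4 \<ge> 0" "x1\<^sup>2 + x4\<^sup>2 = 1"
  shows "x1 * x1 + x4 * x4 = 1" "0 < x1 \<Longrightarrow> x1 < 1 \<Longrightarrow> 0 < x4"
    "x1 = 1 \<Longrightarrow> x4 = 0" "x1 = 0 \<Longrightarrow> x4 = 1"
proof -
  show sq: "x1 * x1 + x4 * x4 = 1" using assms(3) by (simp add: power2_eq_square)
  show "0 < x4" if "0 < x1" "x1 < 1"
  proof -
    have "x1 * x1 < 1 * 1" using that by (intro mult_strict_mono) auto
    then show ?thesis using sq assms(2) by (cases "x4 = 0") auto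
  qed
  show "x1 = 1 \<Longrightarrow> x4 = 0" using sq by simp
  show "x1 = 0 \<Longrightarrow> x4 = 1" using assms(2,3) by (auto simp: power2_eq_1_iff)
qed

theorem lemma4p4:
  shows "(\<forall>p\<in>ASD_bundle. \<exists>A B x1 x4. A \<in> SO \<and> B \<in> SO \<and> x1 \<ge> 0 \<and> x4 \<ge> 0 \<and>
            fst (act (blockdiag A B) p) = vector [x1, 0, 0, x4, 0])
   \<and> (\<forall>x1 x4 a1 a2 a3 :: real. x1 \<ge> 0 \<and> x4 \<ge> 0 \<and> x1\<^sup>2 + x4\<^sup>2 = 1 \<longrightarrow>
        (let Orb = orbit32 (fpt (vector [x1, 0, 0, x4, 0]) a1 a2 a3) in
          (0 < x1 \<and> x1 < 1 \<and> (a2, a3) \<noteq> (0, 0) \<longrightarrow> diffeomorphic_sets Orb G32)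
        \<and> (0 < x1 \<and> x1 < 1 \<and> (a2, a3) = (0, 0) \<longrightarrow>
             diffeomorphic_sets Orb (sphere (0::real^3) 1 \<times> sphere (0::real^2) 1))
        \<and> (x1 = 1 \<and> (a2, a3) \<noteq> (0, 0) \<longrightarrow> diffeomorphic_quotient Orb G32 mult32 H_diag)
        \<and> (x1 = 1 \<and> (a2, a3) = (0, 0) \<longrightarrow> diffeomorphic_sets Orb (sphere (0::real^3) 1))
        \<and> (x1 = 0 \<and> (a1, a2, a3) \<noteq> (0, 0, 0) \<longrightarrow>
             diffeomorphic_sets Orb (sphere (0::real^3) 1 \<times> sphere (0::real^2) 1))
        \<and> (x1 = 0 \<and> (a1, a2, a3) = (0, 0, 0) \<longrightarrow> diffeomorphic_sets Orb (sphere (0::real^2) 1))))"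
proof (intro conjI ballI allI impI)
  fix p :: "(real^5) \<times> (real^5^5)"
  show "\<exists>A B x1 x4. A \<in> SO \<and> B \<in> SO \<and> x1 \<ge> 0 \<and> x4 \<ge> 0 \<and>
      fst (act (blockdiag A B) p) = vector [x1, 0, 0, x4, 0]"
    by (rule normal_form)
next
  fix x1 x4 a1 a2 a3 :: real
  assume "x1 \<ge> 0 \<and> x4 \<ge> 0 \<and> x1\<^sup>2 + x4\<^sup>2 = 1"
  note x = base_point_cases[of x1 x4] this
  show "let Orb = orbit32 (fpt (vector [x1, 0, 0, x4, 0]) a1 a2 a3) in
          (0 < x1 \<and> x1 < 1 \<and> (a2, a3) \<noteq> (0, 0) \<longrightarrow> diffeomorphic_sets Orb G32)
        \<and> (0 < x1 \<and> x1 < 1 \<and> (a2, a3) = (0, 0) \<longrightarrow>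
             diffeomorphic_sets Orb (sphere (0::real^3) 1 \<times> sphere (0::real^2) 1))
        \<and> (x1 = 1 \<and> (a2, a3) \<noteq> (0, 0) \<longrightarrow> diffeomorphic_quotient Orb G32 mult32 H_diag)
        \<and> (x1 = 1 \<and> (a2, a3) = (0, 0) \<longrightarrow> diffeomorphic_sets Orb (sphere (0::real^3) 1))
        \<and> (x1 = 0 \<and> (a1, a2, a3) \<noteq> (0, 0, 0) \<longrightarrow>
             diffeomorphic_sets Orb (sphere (0::real^3) 1 \<times> sphere (0::real^2) 1))
        \<and> (x1 = 0 \<and> (a1, a2, a3) = (0, 0, 0) \<longrightarrow> diffeomorphic_sets Orb (sphere (0::real^2) 1))"
    unfolding Let_def
    using x orbit_diffeo_group[of x1 x4 a2 a3 a1] orbit_diffeo_S2_S1_generic[of x1 x4 a1]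
      orbit_quotient_pole[of a2 a3 a1] orbit_diffeo_S2[of a1] orbit_diffeo_S2_S1_e4[of a1 a2 a3]
      orbit_diffeo_S1
    by auto
qed

end
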